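(* Let $\sigma>0$. If $f=\sum_{n\in\mathbb N_0^d}a_n(f)l_n\in\mathcal G_{\flat_\sigma}(\mathbb R^d_+)$, then $f\circ v\in\mathcal H_{\flat_\sigma,even}(\mathbb R^d)$ and $f\circ v=\sum_{n\in\mathbb N_0^d}b_{2n}h_{2n}$, where $\{b_{2n}\}_{n\in\mathbb N_0^d}\in\ell_{\flat_\sigma}(\mathbb N_0^d)$ is given by $$b_{2n}=\frac{(-1)^{|n|}\pi^{d/4}\sqrt{(2n)!}}{2^{|n|}n!}\sum_{k\in\mathbb N_0^d}a_{k+n}(f)\binom{k-\mathbf{1/2}}{k},\quad n\in\mathbb N_0^d.$$
   Context: $\mathbb R^d_+=(0,\infty)^d$; $v(x)=(x_1^2,\dots,x_d^2)$ for $x\in\mathbb R^d$. Multi-indices: $|n|=\sum n_j$, $n!=\prod n_j!$, $2n=(2n_1,\dots,2n_d)$, $\mathbf{1/2}=(1/2,\dots,1/2)$, $\binom{\gamma}{m}=\prod_j\frac{\gamma_j(\gamma_j-1)\cdots(\gamma_j-m_j+1)}{m_j!}$. Laguerre functions $l_n(x)=\prod_jL_{n_j}(x_j)e^{-x_j/2}$ on $[0,\infty)^d$ with $L_m(t)=\frac{e^t}{m!}\frac{d^m}{dt^m}(e^{-t}t^m)$; Hermite functions $h_n(x)=\prod_j(2^{n_j}n_j!\sqrt\pi)^{-1/2}e^{-x_j^2/2}H_{n_j}(x_j)$, $H_m(t)=(-1)^me^{t^2}\frac{d^m}{dt^m}e^{-t^2}$. For $\tau>0$, $\ell_{\flat_\tau}(\mathbb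 N_0^d)$ is the set of complex sequences $\{a_n\}$ such that $\sup_n|a_n|h^{|n|}n!^{1/(2\tau)}<\infty$ for some $h>0$. $\mathcal G_{\flat_\sigma}(\mathbb R^d_+)$ is the space of functions $f=\sum_na_nl_n$ (absolutely convergent series) with $\{a_n\}\in\ell_{\flat_{\sigma/2}}(\mathbb N_0^d)$, and $a_n(f)=a_n$. $\mathcal H_{\flat_\sigma}(\mathbb R^d)$ is the space of $\sum_na_nh_n$ with $\{a_n\}\in\ell_{\flat_\sigma}(\mathbb N_0^d)$, and $\mathcal H_{\flat_\sigma,even}(\mathbb R^d)$ its subspace of functions invariant under changing the sign of any single coordinate. The notation $\{b_{2n}\}_n\in\ell_{\flat_\sigma}(\mathbb N_0^d)$ means that the sequence equal to $b_k$ at $k=2n$ and $0$ elsewhere belongs to $\ell_{\flat_\sigma}(\mathbb N_0^d)$. *)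

theory Defs
  imports "HOL-Analysis.Analysis"
begin

text \<open>Multi-indices in N_0^d are functions 'd \<Rightarrow> nat for a finite index type 'd
  (d = CARD('d)); points of R^d are functions 'd \<Rightarrow> real.\<close>

definition mi_abs :: "('d::finite \<Rightarrow> nat) \<Rightarrow> nat" where
  "mi_abs n = (\<Sum>j\<in>UNIV. n j)"

definition mi_fact :: "('d::finite \<Rightarrow> nat) \<Rightarrow> real" where
  "mi_fact n = (\<Prod>j\<in>UNIV. fact (n j))"

definition vsq :: "('d::finite \<Rightarrow> real) \<Rightarrow> ('d \<Rightarrow> real)" where
  "vsq x = (\<lambda>j. (x j)^2)"

definition laguerre_poly :: "nat \<Rightarrow> real \<Rightarrow> real" where
  "laguerre_poly m t = exp t / fact m * ((deriv ^^ m) (\<lambda>s. exp (- s) * s ^ m)) t"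

definition laguerre_fun :: "('d::finite \<Rightarrow> nat) \<Rightarrow> ('d \<Rightarrow> real) \<Rightarrow> real" where
  "laguerre_fun n x = (\<Prod>j\<in>UNIV. laguerre_poly (n j) (x j) * exp (- x j / 2))"

definition hermite_poly :: "nat \<Rightarrow> real \<Rightarrow> real" where
  "hermite_poly m t = (-1) ^ m * exp (t^2) * ((deriv ^^ m) (\<lambda>s. exp (- (s^2)))) t"

definition hermite_fun :: "('d::finite \<Rightarrow> nat) \<Rightarrow> ('d \<Rightarrow> real) \<Rightarrow> real" where
  "hermite_fun n x = (\<Prod>j\<in>UNIV. inverse (sqrt (2 ^ n j * fact (n j) * sqrt pi))
                          * exp (- ((x j)^2) / 2) * hermite_poly (n j) (x j))"

definition ell_flat :: "real \<Rightarrow> (('d::finite \<Rightarrow> nat) \<Rightarrow> complex) set" where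
  "ell_flat \<tau> = {a. \<exists>h>0. bdd_above (range (\<lambda>n. norm (a n) * h ^ mi_abs n * mi_fact n powr (1 / (2 * \<tau>))))}"

definition H_flat :: "real \<Rightarrow> (('d::finite \<Rightarrow> real) \<Rightarrow> complex) set" where
  "H_flat \<sigma> = {g. \<exists>c \<in> ell_flat \<sigma>. \<forall>x.
      (\<lambda>n. c n * complex_of_real (hermite_fun n x)) summable_on UNIV \<and>
      g x = (\<Sum>\<^sub>\<infinity>n. c n * complex_of_real (hermite_fun n x))}"

definition H_flat_even :: "real \<Rightarrow> (('d::finite \<Rightarrow> real) \<Rightarrow> complex) set" where
  "H_flat_even \<sigma> = {g \<in> H_flat \<sigma>. \<forall>x j. g (x(j := - x j)) = g x}"

end

(*
  In one variable, the closed forms of L_k and H_2n and the Chu-Vandermonde identity for the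
  coefficients binom(k - 1/2, k) give the finite expansion
    L_k(t^2) exp(-t^2/2) = sum_{n <= k} binom(k - n - 1/2, k - n) kappa_n h_2n(t),
  where kappa_n = (-1)^n pi^(1/4) sqrt((2n)!) / (2^n n!).  Taking products over the coordinates,
  l_k(v x) is a finite combination of the h_2m(x) with m <= k.  Substituting this into
  f(v x) = sum_k a_k l_k(v x) gives a double series that converges absolutely, because
  |kappa_m h_2m(x)| <= (1 + 2|x|^2)^|m|, the box {m <= k} has at most 2^|k| points, and a_k decays
  faster than any geometric sequence; summing over k first produces the coefficients b_2n.
  Finally |binom(k - 1/2, k)| <= 1 and k! n! <= (k + n)! show that b_n decays like a_n, and
  (2n)! <= 4^|n| (n!)^2 converts this into the decay required of b_2n in l_flat_sigma.
*)

theory Submission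
  imports Defs "HOL-Computational_Algebra.Polynomial"
begin

section \<open>Closed forms of the Laguerre and Hermite polynomials\<close>

definition exp_poly_deriv :: "real poly \<Rightarrow> real poly \<Rightarrow> real poly" where
  "exp_poly_deriv q p = pderiv p + pderiv q * p"

lemma deriv_exp_poly_mult:
  "deriv (\<lambda>s. exp (poly q s) * poly p s) = (\<lambda>s. exp (poly q s) * poly (exp_poly_deriv q p) s)"
proof
  fix s :: real
  have "((\<lambda>s. exp (poly q s) * poly p s) has_real_derivative
        exp (poly q s) * poly (pderiv q) s * poly p s + exp (poly q s) * poly (pderiv p) s) (at s)"
    by (auto intro!: derivative_eq_intros simp: poly_DERIV)
  then show "deriv (\<lambda>s. exp (poly q s) * poly p s) s = exp (poly q s) * poly (exp_poly_deriv q p) s"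
    by (auto dest!: DERIV_imp_deriv simp: exp_poly_deriv_def algebra_simps)
qed

lemma higher_deriv_exp_poly_mult:
  "(deriv ^^ j) (\<lambda>s. exp (poly q s) * poly p s) = (\<lambda>s. exp (poly q s) * poly ((exp_poly_deriv q ^^ j) p) s)"
  by (induction j) (simp_all add: deriv_exp_poly_mult)

lemma poly_eq_sum_atMost:
  fixes p :: "'a::comm_semiring_1 poly"
  assumes "\<And>i. n < i \<Longrightarrow> coeff p i = 0"
  shows "poly p x = (\<Sum>i\<le>n. coeff p i * x ^ i)"
proof -
  have "degree p \<le> n" using assms by (intro degree_le) auto
  then have "(\<Sum>i\<le>degree p. coeff p i * x ^ i) = (\<Sum>i\<le>n. coeff p i * x ^ i)"
    using assms by (intro sum.mono_neutral_left) (auto simp: coeff_eq_0)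
  then show ?thesis by (simp add: poly_altdef)
qed

lemma coeff_exp_poly_deriv_laguerre:
  "coeff (exp_poly_deriv [:0, -1:] p) l = real (Suc l) * coeff p (Suc l) - coeff p l"
  by (simp add: exp_poly_deriv_def coeff_pderiv pderiv_pCons)

lemma coeff_exp_poly_deriv_laguerre_iter:
  "coeff ((exp_poly_deriv [:0, -1:] ^^ j) (monom 1 m)) l =
     (if l \<le> m then real (j choose (m - l)) * (-1) ^ (j + m + l) * fact m / fact l else 0)"
proof (induction j arbitrary: l)
  case 0
  then show ?case by (auto simp: coeff_monom)
next
  case (Suc j)
  show ?case
  proof (cases "l < m")
    case True
    have fact_Suc_div: "real (Suc l) / fact (Suc l) = (1::real) / fact l" by simp
    have "coeff ((exp_poly_deriv [:0, -1:] ^^ Suc j) (monom 1 m)) l =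
        (real (Suc l) / fact (Suc l)) * (real (j choose (m - Suc l)) * (-1) ^ (j + m + Suc l) * fact m)
        - real (j choose (m - l)) * (-1) ^ (j + m + l) * fact m / fact l"
      using Suc True by (simp add: coeff_exp_poly_deriv_laguerre)
    also have "\<dots> = (real (j choose (m - Suc l)) + real (j choose (m - l))) * (-1) ^ (Suc j + m + l) * fact m / fact l"
      unfolding fact_Suc_div by (simp add: field_simps)
    also have "real (j choose (m - Suc l)) + real (j choose (m - l)) = real (Suc j choose (m - l))"
      using True by (simp add: Suc_diff_Suc[symmetric])
    finally show ?thesis using True by simp
  qed (use Suc in \<open>auto simp: coeff_exp_poly_deriv_laguerre\<close>)
qed

lemma laguerre_poly_eq_sum:
  "laguerre_poly m t = (\<Sum>l\<le>m. real (m choose l) * (-1) ^ l * t ^ l / fact l)"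
proof -
  have rodrigues: "(\<lambda>s::real. exp (- s) * s ^ m) = (\<lambda>s. exp (poly [:0, -1:] s) * poly (monom 1 m) s)"
    by (simp add: poly_monom)
  have "laguerre_poly m t = poly ((exp_poly_deriv [:0, -1:] ^^ m) (monom 1 m)) t / fact m"
    unfolding laguerre_poly_def rodrigues higher_deriv_exp_poly_mult by (simp add: exp_minus)
  also have "\<dots> = (\<Sum>l\<le>m. real (m choose (m - l)) * (-1) ^ (m + m + l) * t ^ l / fact l)"
    by (subst poly_eq_sum_atMost[of m]) (auto simp: coeff_exp_poly_deriv_laguerre_iter sum_divide_distrib mult_ac)
  also have "\<dots> = (\<Sum>l\<le>m. real (m choose l) * (-1) ^ l * t ^ l / fact l)"
    by (intro sum.cong refl) (simp add: binomial_symmetric[symmetric] power_add flip: mult_2)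
  finally show ?thesis .
qed

definition hermite_step :: "real poly \<Rightarrow> real poly" where
  "hermite_step p = [:0, 2:] * p - pderiv p"

lemma exp_poly_deriv_gauss: "exp_poly_deriv [:0, 0, -1:] p = - hermite_step p"
  by (simp add: exp_poly_deriv_def hermite_step_def pderiv_pCons)

lemma exp_poly_deriv_gauss_iter:
  "(exp_poly_deriv [:0, 0, -1:] ^^ m) 1 = smult ((-1) ^ m) ((hermite_step ^^ m) 1)"
proof (induction m)
  case (Suc m)
  have "hermite_step (smult c p) = smult c (hermite_step p)" for c p
    by (simp add: hermite_step_def pderiv_smult smult_diff_right)
  then show ?case
    using Suc by (simp del: minus_pCons add: exp_poly_deriv_gauss)
qed simp

lemma hermite_poly_eq_poly: "hermite_poly m t = poly ((hermite_step ^^ m) 1) t"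
proof -
  have rodrigues: "(\<lambda>s::real. exp (- (s^2))) = (\<lambda>s. exp (poly [:0, 0, -1:] s) * poly 1 s)"
    by (simp add: power2_eq_square)
  show ?thesis
    unfolding hermite_poly_def rodrigues higher_deriv_exp_poly_mult exp_poly_deriv_gauss_iter
    by (simp add: exp_minus power2_eq_square mult.left_commute[of "(-1) ^ m"] flip: power_add mult_2)
qed

lemma coeff_hermite_step:
  "coeff (hermite_step p) j = 2 * (case j of 0 \<Rightarrow> 0 | Suc i \<Rightarrow> coeff p i) - real (Suc j) * coeff p (Suc j)"
  by (simp add: hermite_step_def coeff_pderiv coeff_pCons split: nat.split)

(* the coefficient of t^i in H_(2k+i) *)
definition hermite_coeff :: "nat \<Rightarrow> nat \<Rightarrow> real" where
  "hermite_coeff k i = (-1) ^ k * 2 ^ i * fact (2 * k + i) / (fact k * fact i)"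

lemma hermite_coeff_0_left [simp]: "hermite_coeff 0 i = 2 ^ i"
  by (simp add: hermite_coeff_def)

lemma hermite_coeff_Suc_0: "hermite_coeff (Suc k) 0 = - hermite_coeff k 1"
proof -
  have "fact (2 * Suc k) = real (2 * Suc k) * (fact (2 * k + 1) :: real)"
    by (simp add: algebra_simps)
  then show ?thesis
    by (simp add: hermite_coeff_def divide_simps del: of_nat_Suc of_nat_mult) (simp add: algebra_simps)
qed

lemma hermite_coeff_Suc_Suc:
  "hermite_coeff (Suc k) (Suc i) = 2 * hermite_coeff (Suc k) i - real (Suc (Suc i)) * hermite_coeff k (Suc (Suc i))"
proof -
  define F where "F = (fact (2 * k + Suc (Suc i)) :: real)"
  have "fact (2 * Suc k + Suc i) = real (2 * k + i + 3) * F" "fact (2 * Suc k + i) = F"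
    by (simp_all add: F_def algebra_simps)
  then show ?thesis
    unfolding hermite_coeff_def fact_Suc[of k] fact_Suc[of "Suc i"] fact_Suc[of i]
    by (simp add: divide_simps del: of_nat_Suc of_nat_mult of_nat_add fact_Suc) (simp add: algebra_simps)
qed

lemma coeff_hermite_step_iter_above: "m < j \<Longrightarrow> coeff ((hermite_step ^^ m) 1) j = 0"
proof (induction m arbitrary: j)
  case (Suc m)
  then show ?case by (simp add: coeff_hermite_step split: nat.split)
qed (simp add: coeff_1)

lemma coeff_hermite_step_iter_odd:
  "m = 2 * k + i + 1 \<Longrightarrow> coeff ((hermite_step ^^ m) 1) i = 0"
proof (induction m arbitrary: k i)
  case (Suc m)
  have "coeff ((hermite_step ^^ m) 1) (Suc i) = 0"
  proof (cases k)
    case 0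
    with Suc.prems show ?thesis by (intro coeff_hermite_step_iter_above) simp
  next
    case (Suc k')
    with Suc.prems show ?thesis by (intro Suc.IH[of k']) simp
  qed
  moreover have "(case i of 0 \<Rightarrow> 0 | Suc i' \<Rightarrow> coeff ((hermite_step ^^ m) 1) i') = 0"
    using Suc by (cases i) auto
  ultimately show ?case by (simp add: coeff_hermite_step)
qed simp

lemma coeff_hermite_step_iter_even:
  "m = 2 * k + i \<Longrightarrow> coeff ((hermite_step ^^ m) 1) i = hermite_coeff k i"
proof (induction m arbitrary: k i)
  case 0
  then show ?case by (simp add: coeff_1)
next
  case (Suc m)
  let ?c = "coeff ((hermite_step ^^ m) 1)"
  show ?case
  proof (cases k)
    case 0
    with Suc.prems have "i = Suc m" by simp
    with 0 Suc.IH[of 0 m] coeff_hermite_step_iter_above[of m "Suc (Suc m)"] show ?thesis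
      by (simp add: coeff_hermite_step)
  next
    case (Suc k')
    show ?thesis
    proof (cases i)
      case 0
      have "?c 1 = hermite_coeff k' 1" using Suc.prems Suc 0 by (intro Suc.IH) simp
      with 0 Suc show ?thesis by (simp add: coeff_hermite_step hermite_coeff_Suc_0)
    next
      case (Suc i')
      have "?c i' = hermite_coeff k i'" "?c (Suc (Suc i')) = hermite_coeff k' (Suc (Suc i'))"
        using Suc.prems Suc \<open>k = Suc k'\<close> by (intro Suc.IH; simp)+
      with Suc \<open>k = Suc k'\<close> show ?thesis by (simp add: coeff_hermite_step hermite_coeff_Suc_Suc)
    qed
  qed
qed

lemma hermite_poly_eq_sum:
  "hermite_poly m t = (\<Sum>k\<le>m div 2. hermite_coeff k (m - 2 * k) * t ^ (m - 2 * k))"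
proof -
  let ?c = "coeff ((hermite_step ^^ m) 1)"
  have "hermite_poly m t = (\<Sum>j\<le>m. ?c j * t ^ j)"
    unfolding hermite_poly_eq_poly by (intro poly_eq_sum_atMost coeff_hermite_step_iter_above)
  also have "\<dots> = (\<Sum>j\<in>(\<lambda>k. m - 2 * k) ` {..m div 2}. ?c j * t ^ j)"
  proof (rule sum.mono_neutral_right)
    show "\<forall>j\<in>{..m} - (\<lambda>k. m - 2 * k) ` {..m div 2}. ?c j * t ^ j = 0"
    proof
      fix j assume j: "j \<in> {..m} - (\<lambda>k. m - 2 * k) ` {..m div 2}"
      have "odd (m - j)"
      proof
        assume "even (m - j)"
        then have "j = m - 2 * ((m - j) div 2)" "(m - j) div 2 \<le> m div 2" using j by auto
        with j show False by blast
      qed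
      then have "m = 2 * ((m - j) div 2) + j + 1" using j by presburger
      then show "?c j * t ^ j = 0" by (simp add: coeff_hermite_step_iter_odd)
    qed
  qed auto
  also have "\<dots> = (\<Sum>k\<le>m div 2. ?c (m - 2 * k) * t ^ (m - 2 * k))"
    by (subst sum.reindex) (auto simp: inj_on_def)
  also have "\<dots> = (\<Sum>k\<le>m div 2. hermite_coeff k (m - 2 * k) * t ^ (m - 2 * k))"
  proof (intro sum.cong refl)
    fix k assume "k \<in> {..m div 2}"
    then have "m = 2 * k + (m - 2 * k)" by auto
    then show "?c (m - 2 * k) * t ^ (m - 2 * k) = hermite_coeff k (m - 2 * k) * t ^ (m - 2 * k)"
      by (simp only: coeff_hermite_step_iter_even)
  qed
  finally show ?thesis .
qed

lemma hermite_poly_even_eq_sum: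
  "hermite_poly (2 * n) t = (\<Sum>i\<le>n. hermite_coeff (n - i) (2 * i) * t ^ (2 * i))"
proof -
  have "hermite_poly (2 * n) t = (\<Sum>k\<le>n. hermite_coeff k (2 * n - 2 * k) * t ^ (2 * n - 2 * k))"
    by (simp add: hermite_poly_eq_sum)
  also have "\<dots> = (\<Sum>i\<le>n. hermite_coeff (n - i) (2 * i) * t ^ (2 * i))"
  proof (rule sum.reindex_bij_witness[of _ "\<lambda>i. n - i" "\<lambda>i. n - i"])
    fix i assume "i \<in> {..n}"
    then have "n - (n - i) = i" "2 * (n - i) = 2 * n - 2 * i" by auto
    then show "hermite_coeff (n - (n - i)) (2 * (n - i)) * t ^ (2 * (n - i)) =
        hermite_coeff i (2 * n - 2 * i) * t ^ (2 * n - 2 * i)" by simp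
  qed auto
  finally show ?thesis .
qed

section \<open>Binomial coefficients with half-integer upper argument\<close>

definition binom_half :: "nat \<Rightarrow> real" where
  "binom_half m = (real m - 1 / 2) gchoose m"

lemma binom_half_pochhammer: "binom_half m = pochhammer (1 / 2) m / fact m"
  unfolding binom_half_def gbinomial_pochhammer' by (simp add: algebra_simps)

lemma fact_double_binom_half: "(fact (2 * n) :: real) = 4 ^ n * binom_half n * (fact n)\<^sup>2"
  unfolding binom_half_pochhammer fact_double by (simp add: power_mult power2_eq_square)

lemma binom_half_central_binomial: "binom_half n = real ((2 * n) choose n) / 4 ^ n"
proof -
  have "real ((2 * n) choose n) = fact (2 * n) / (fact n * fact n)"
    using binomial_fact[of n "2 * n"] by simp
  then show ?thesis unfolding fact_double_binom_half by (simp add: power2_eq_square)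
qed

lemma binom_half_pos: "0 < binom_half n"
  unfolding binom_half_central_binomial by simp

lemma binom_half_le_1: "binom_half n \<le> 1"
proof -
  have "real ((2 * n) choose n) \<le> 2 ^ (2 * n)"
    using binomial_le_pow2[of "2 * n" n] by (metis of_nat_le_iff of_nat_numeral of_nat_power)
  then show ?thesis unfolding binom_half_central_binomial by (simp add: power_mult)
qed

lemma binom_half_inverse_le: "1 / (binom_half i * fact i) \<le> 2 ^ i"
proof -
  have "1 \<le> 2 ^ i * pochhammer (1/2 :: real) i"
  proof (induction i)
    case (Suc i)
    have "2 ^ Suc i * pochhammer (1/2 :: real) (Suc i) = (2 ^ i * pochhammer (1/2) i) * (1 + 2 * real i)"
      by (simp add: pochhammer_Suc field_simps)
    also have "\<dots> \<ge> 1 * 1" using Suc by (intro mult_mono) auto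
    finally show ?case by simp
  qed simp
  moreover have "binom_half i * fact i = pochhammer (1/2) i"
    unfolding binom_half_pochhammer by simp
  ultimately show ?thesis
    using pochhammer_pos[of "1/2 :: real" i] by (simp add: field_simps)
qed

lemma binom_half_convolution:
  assumes "i \<le> k"
  shows "(\<Sum>n=i..k. binom_half (k - n) * binom_half n * real (n choose i)) = binom_half i * real (k choose i)"
proof -
  define N where "N = k - i"
  have shift: "binom_half n * real (n choose i) = binom_half i * (pochhammer (real i + 1/2) (n - i) / fact (n - i))"
    if "i \<le> n" for n
  proof -
    have "pochhammer (1/2::real) n = pochhammer (1/2) i * pochhammer (1/2 + real i) (n - i)"
      by (rule pochhammer_product[OF that])
    moreover have "real (n choose i) = fact n / (fact i * fact (n - i))"
      using binomial_fact[OF that] by simp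
    ultimately show ?thesis unfolding binom_half_pochhammer by (simp add: field_simps)
  qed
  have gchoose_pochhammer: "pochhammer (c :: real) l / fact l = (-1) ^ l * ((- c) gchoose l)" for c l
    by (simp add: gbinomial_pochhammer)
  have "(\<Sum>n=i..k. binom_half (k - n) * binom_half n * real (n choose i))
      = binom_half i * (\<Sum>n=i..k. binom_half (k - n) * (pochhammer (real i + 1/2) (n - i) / fact (n - i)))"
    by (simp add: sum_distrib_left shift mult.assoc mult.left_commute)
  also have "(\<Sum>n=i..k. binom_half (k - n) * (pochhammer (real i + 1/2) (n - i) / fact (n - i)))
      = (\<Sum>l=0..N. binom_half (N - l) * (pochhammer (real i + 1/2) l / fact l))"
  proof -
    have ivl: "{i..k} = {0 + i..N + i}" using assms by (simp add: N_def)
    show ?thesis unfolding ivl sum.shift_bounds_cl_nat_ivl by (simp add: N_def add.commute)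
  qed
  also have "\<dots> = (\<Sum>l=0..N. (-1) ^ N * (((- real i - 1/2) gchoose l) * ((- 1/2) gchoose (N - l))))"
  proof (intro sum.cong refl)
    fix l assume l: "l \<in> {0..N}"
    have "(-1::real) ^ (N - l) * (-1) ^ l = (-1) ^ N"
      using l by (simp flip: power_add)
    then show "binom_half (N - l) * (pochhammer (real i + 1 / 2) l / fact l) =
        (-1) ^ N * (((- real i - 1/2) gchoose l) * ((- 1/2) gchoose (N - l)))"
      unfolding binom_half_pochhammer gchoose_pochhammer by (simp add: algebra_simps)
  qed
  also have "\<dots> = (-1) ^ N * ((- real i - 1/2 + (- 1/2)) gchoose N)"
    by (simp add: sum_distrib_left[symmetric] gbinomial_Vandermonde)
  also have "(- real i - 1/2 + (- 1/2)) gchoose N = (-1) ^ N * (pochhammer (real i + 1) N / fact N)"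
    by (simp add: gbinomial_pochhammer algebra_simps)
  also have "pochhammer (real i + 1) N / fact N = real (i + N) gchoose N"
    by (simp add: gbinomial_pochhammer' algebra_simps)
  also have "real (i + N) gchoose N = real (k choose i)"
    unfolding binomial_gbinomial[symmetric] N_def using assms by (simp add: binomial_symmetric[of i k])
  finally show ?thesis by simp
qed

section \<open>Laguerre functions of a square in one variable\<close>

lemma sum_atMost_atMost_swap:
  fixes k :: nat
  shows "(\<Sum>n\<le>k. \<Sum>i\<le>n. f n i) = (\<Sum>i\<le>k. \<Sum>n=i..k. f n i)"
proof -
  have "{i\<in>{..k}. i \<le> n} = {..n}" if "n \<le> k" for n
    using that by auto
  then have "(\<Sum>n\<le>k. \<Sum>i\<le>n. f n i) = (\<Sum>n\<le>k. \<Sum>i\<in>{i\<in>{..k}. i \<le> n}. f n i)"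
    by (intro sum.cong) auto
  also have "\<dots> = (\<Sum>i\<le>k. \<Sum>n\<in>{n\<in>{..k}. i \<le> n}. f n i)"
    by (rule sum.swap_restrict) auto
  also have "\<dots> = (\<Sum>i\<le>k. \<Sum>n=i..k. f n i)"
    by (intro sum.cong refl) (auto intro: sum.cong)
  finally show ?thesis .
qed

lemma hermite_poly_even_scaled:
  "(-1) ^ n / (4 ^ n * fact n) * hermite_poly (2 * n) t =
     binom_half n * (\<Sum>i\<le>n. real (n choose i) * (-1) ^ i * (t\<^sup>2) ^ i / (binom_half i * fact i))"
proof -
  have "(-1) ^ n / (4 ^ n * fact n) * (hermite_coeff (n - i) (2 * i) * t ^ (2 * i)) =
      binom_half n * (real (n choose i) * (-1) ^ i * (t\<^sup>2) ^ i / (binom_half i * fact i))"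
    if "i \<le> n" for i
  proof -
    have sign: "(-1::real) ^ n * (-1) ^ (n - i) = (-1) ^ i"
      using that by (simp add: minus_one_power_iff even_diff_nat)
    have "2 * (n - i) + 2 * i = 2 * n" using that by simp
    then have "hermite_coeff (n - i) (2 * i) = (-1) ^ (n - i) * 4 ^ i * fact (2 * n) / (fact (n - i) * fact (2 * i))"
      unfolding hermite_coeff_def by (simp add: power_mult)
    then have hc: "hermite_coeff (n - i) (2 * i) =
        (-1) ^ (n - i) * 4 ^ i * (4 ^ n * binom_half n * (fact n)\<^sup>2) / (fact (n - i) * (4 ^ i * binom_half i * (fact i)\<^sup>2))"
      by (simp only: fact_double_binom_half)
    have bin: "real (n choose i) = fact n / (fact i * fact (n - i))"
      using binomial_fact[OF that] by simp
    \<comment> \<open>with abstract variables, because \<open>field_simps\<close> does not terminate on the actual powers and factorials\<close>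
    have alg: "sn / (4 ^ n * fn) * (s * 4 ^ i * (4 ^ n * b * fn\<^sup>2) / (fd * (4 ^ i * bi * fi\<^sup>2)) * X) =
        b * (fn / (fi * fd) * (sn * s) * X / (bi * fi))"
      if "bi \<noteq> 0" "fn \<noteq> 0" "fi \<noteq> 0" "fd \<noteq> 0" for sn s b bi fn fi fd X :: real
      using that by (simp add: field_simps power2_eq_square)
    show ?thesis
      unfolding hc bin power_mult sign[symmetric] by (rule alg) (use binom_half_pos[of i] in auto)
  qed
  then show ?thesis
    unfolding hermite_poly_even_eq_sum sum_distrib_left by (intro sum.cong refl) auto
qed

definition hermite_fun1 :: "nat \<Rightarrow> real \<Rightarrow> real" where
  "hermite_fun1 m t = inverse (sqrt (2 ^ m * fact m * sqrt pi)) * exp (- (t\<^sup>2) / 2) * hermite_poly m t"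

definition hermite_scale :: "nat \<Rightarrow> real" where
  "hermite_scale n = (-1) ^ n * pi powr (1/4) * sqrt (fact (2 * n)) / (2 ^ n * fact n)"

lemma hermite_scale_mult_hermite_fun1:
  "hermite_scale n * hermite_fun1 (2 * n) t =
     exp (- (t\<^sup>2) / 2) * binom_half n * (\<Sum>i\<le>n. real (n choose i) * (-1) ^ i * (t\<^sup>2) ^ i / (binom_half i * fact i))"
proof -
  have "sqrt (sqrt pi) = pi powr (1/4)"
    by (simp add: powr_half_sqrt[symmetric] powr_powr)
  then have "sqrt (2 ^ (2 * n) * fact (2 * n) * sqrt pi) = 2 ^ n * sqrt (fact (2 * n)) * pi powr (1/4)"
    by (simp add: real_sqrt_mult power_mult real_sqrt_power)
  then have "hermite_scale n * hermite_fun1 (2 * n) t =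
      exp (- (t\<^sup>2) / 2) * ((-1) ^ n / (4 ^ n * fact n) * hermite_poly (2 * n) t)"
    unfolding hermite_scale_def hermite_fun1_def
    by (simp add: field_simps power_mult flip: power_mult_distrib)
  also have "\<dots> = exp (- (t\<^sup>2) / 2) * binom_half n *
      (\<Sum>i\<le>n. real (n choose i) * (-1) ^ i * (t\<^sup>2) ^ i / (binom_half i * fact i))"
    by (simp only: hermite_poly_even_scaled mult.assoc)
  finally show ?thesis .
qed

lemma laguerre_poly_square_eq_sum:
  "laguerre_poly k (t\<^sup>2) * exp (- (t\<^sup>2) / 2) =
     (\<Sum>n\<le>k. binom_half (k - n) * (hermite_scale n * hermite_fun1 (2 * n) t))"
proof -
  define c where "c i = (-1) ^ i * (t\<^sup>2) ^ i / (binom_half i * fact i)" for i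
  have "(\<Sum>n\<le>k. binom_half (k - n) * (hermite_scale n * hermite_fun1 (2 * n) t))
      = exp (- (t\<^sup>2) / 2) * (\<Sum>n\<le>k. \<Sum>i\<le>n. binom_half (k - n) * binom_half n * real (n choose i) * c i)"
    unfolding hermite_scale_mult_hermite_fun1 c_def sum_distrib_left by (simp add: mult_ac)
  also have "(\<Sum>n\<le>k. \<Sum>i\<le>n. binom_half (k - n) * binom_half n * real (n choose i) * c i)
      = (\<Sum>i\<le>k. (\<Sum>n=i..k. binom_half (k - n) * binom_half n * real (n choose i)) * c i)"
    by (simp add: sum_atMost_atMost_swap sum_distrib_right)
  also have "\<dots> = (\<Sum>i\<le>k. real (k choose i) * (-1) ^ i * (t\<^sup>2) ^ i / fact i)"
    using binom_half_pos[THEN less_imp_neq] by (intro sum.cong refl) (simp add: binom_half_convolution c_def)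
  finally show ?thesis by (simp add: laguerre_poly_eq_sum)
qed

lemma abs_hermite_scale_mult_hermite_fun1_le:
  "\<bar>hermite_scale n * hermite_fun1 (2 * n) t\<bar> \<le> (1 + 2 * t\<^sup>2) ^ n"
proof -
  have "\<bar>hermite_scale n * hermite_fun1 (2 * n) t\<bar> =
      exp (- (t\<^sup>2) / 2) * binom_half n * \<bar>\<Sum>i\<le>n. real (n choose i) * (-1) ^ i * (t\<^sup>2) ^ i / (binom_half i * fact i)\<bar>"
    using binom_half_pos[of n] by (simp add: hermite_scale_mult_hermite_fun1 abs_mult)
  also have "\<dots> \<le> 1 * (\<Sum>i\<le>n. \<bar>real (n choose i) * (-1) ^ i * (t\<^sup>2) ^ i / (binom_half i * fact i)\<bar>)"
  proof (intro mult_mono sum_abs)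
    show "exp (- (t\<^sup>2) / 2) * binom_half n \<le> 1"
      using binom_half_pos[of n] binom_half_le_1[of n] by (intro mult_le_one) auto
  qed auto
  also have "\<dots> = (\<Sum>i\<le>n. \<bar>real (n choose i) * (-1) ^ i * (t\<^sup>2) ^ i / (binom_half i * fact i)\<bar>)"
    by simp
  also have "\<dots> \<le> (\<Sum>i\<le>n. real (n choose i) * (2 * t\<^sup>2) ^ i)"
  proof (intro sum_mono)
    fix i
    have "\<bar>real (n choose i) * (-1) ^ i * (t\<^sup>2) ^ i / (binom_half i * fact i)\<bar>
        = real (n choose i) * (t\<^sup>2) ^ i * (1 / (binom_half i * fact i))"
      using binom_half_pos[of i] by (simp add: abs_mult power_abs)
    also have "\<dots> \<le> real (n choose i) * (t\<^sup>2) ^ i * 2 ^ i"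
      by (intro mult_left_mono binom_half_inverse_le) auto
    finally show "\<bar>real (n choose i) * (-1) ^ i * (t\<^sup>2) ^ i / (binom_half i * fact i)\<bar>
        \<le> real (n choose i) * (2 * t\<^sup>2) ^ i"
      by (simp add: power_mult_distrib mult_ac)
  qed
  also have "\<dots> = (1 + 2 * t\<^sup>2) ^ n"
    using binomial_ring[of "2 * t\<^sup>2" 1 n] by (simp add: add.commute)
  finally show ?thesis .
qed

lemma abs_hermite_scale_le: "\<bar>hermite_scale n\<bar> \<le> pi powr (1/4)"
proof -
  have "(2 ^ n * fact n)\<^sup>2 = 4 ^ n * (fact n :: real)\<^sup>2"
    unfolding power2_eq_square by (simp add: algebra_simps flip: power_mult_distrib)
  then have "(fact (2 * n) :: real) \<le> (2 ^ n * fact n)\<^sup>2"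
    using binom_half_le_1[of n] by (simp add: fact_double_binom_half mult_left_le)
  then have "sqrt (fact (2 * n)) \<le> 2 ^ n * (fact n :: real)"
    by (simp add: real_le_lsqrt)
  then have "sqrt (fact (2 * n)) / (2 ^ n * fact n) \<le> 1"
    by simp
  moreover have "\<bar>hermite_scale n\<bar> = pi powr (1/4) * (sqrt (fact (2 * n)) / (2 ^ n * fact n))"
    by (simp add: hermite_scale_def abs_mult)
  ultimately show ?thesis
    by (simp only:) (rule mult_left_le, simp_all)
qed

section \<open>Multi-indices\<close>

lemma atMost_fun_eq_PiE: "{..k} = PiE UNIV (\<lambda>j. {..k j})"
  by (auto simp: le_fun_def PiE_def Pi_def extensional_def)

lemma finite_atMost_mi [simp]: "finite {..k :: 'd::finite \<Rightarrow> nat}"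
  unfolding atMost_fun_eq_PiE by (rule finite_PiE) auto

lemma card_atMost_mi_le: "real (card {..k :: 'd::finite \<Rightarrow> nat}) \<le> 2 ^ mi_abs k"
proof -
  have "card {..k} = (\<Prod>j\<in>UNIV. Suc (k j))"
    unfolding atMost_fun_eq_PiE by (simp add: card_PiE)
  also have "\<dots> \<le> (\<Prod>j\<in>UNIV. 2 ^ k j)"
    by (intro prod_mono) (auto simp: Suc_le_eq less_exp)
  also have "\<dots> = 2 ^ mi_abs k" unfolding mi_abs_def power_sum ..
  finally show ?thesis by (metis of_nat_le_iff of_nat_numeral of_nat_power)
qed

lemma mi_abs_mono: "m \<le> k \<Longrightarrow> mi_abs m \<le> mi_abs k"
  unfolding mi_abs_def le_fun_def by (auto intro: sum_mono)

lemma mi_abs_add: "mi_abs (\<lambda>j. l j + n j) = mi_abs l + mi_abs n"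
  unfolding mi_abs_def by (simp add: sum.distrib)

lemma mi_fact_pos: "0 < mi_fact n"
  unfolding mi_fact_def by (simp add: prod_pos)

lemma mi_fact_mult_le: "mi_fact l * mi_fact n \<le> mi_fact (\<lambda>j. l j + n j)"
proof -
  have "fact a * fact b \<le> (fact (a + b) :: nat)" for a b
    by (rule dvd_imp_le[OF fact_fact_dvd_fact]) simp
  then have "fact a * fact b \<le> (fact (a + b) :: real)" for a b
    by (metis of_nat_fact of_nat_le_iff of_nat_mult)
  then show ?thesis
    unfolding mi_fact_def prod.distrib[symmetric] by (intro prod_mono) auto
qed

lemma mi_weight_mult_le:
  assumes "h > 0" "e \<ge> 0"
  shows "(h ^ mi_abs k * mi_fact k powr e) * (h ^ mi_abs n * mi_fact n powr e)
    \<le> h ^ mi_abs (\<lambda>j. k j + n j) * mi_fact (\<lambda>j. k j + n j) powr e"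
proof -
  have "(mi_fact k * mi_fact n) powr e \<le> mi_fact (\<lambda>j. k j + n j) powr e"
    using mi_fact_mult_le[of k n] mi_fact_pos[of k] mi_fact_pos[of n] assms(2)
    by (intro powr_mono2) auto
  then show ?thesis
    using assms(1) mi_fact_pos[of k] mi_fact_pos[of n]
    by (simp add: mi_abs_add power_add powr_mult mult_ac mult_left_mono)
qed

lemma mi_fact_double_le: "mi_fact (\<lambda>j. 2 * n j) \<le> 4 ^ mi_abs n * (mi_fact n)\<^sup>2"
proof -
  have "mi_fact (\<lambda>j. 2 * n j) \<le> (\<Prod>j\<in>UNIV. 4 ^ n j * (fact (n j))\<^sup>2)"
    unfolding mi_fact_def fact_double_binom_half
    using binom_half_pos binom_half_le_1 by (intro prod_mono) (auto simp: less_imp_le mult_left_le)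
  also have "\<dots> = 4 ^ mi_abs n * (mi_fact n)\<^sup>2"
    unfolding mi_abs_def mi_fact_def power_sum by (simp add: prod.distrib prod_power_distrib)
  finally show ?thesis .
qed

lemma mi_fact_double_powr_le:
  assumes "e \<ge> 0"
  shows "mi_fact (\<lambda>j. 2 * n j) powr e \<le> (4 powr e) ^ mi_abs n * mi_fact n powr (2 * e)"
proof -
  have "mi_fact (\<lambda>j. 2 * n j) powr e \<le> (4 ^ mi_abs n * (mi_fact n)\<^sup>2) powr e"
    using mi_fact_double_le[of n] mi_fact_pos[of "\<lambda>j. 2 * n j"] assms by (intro powr_mono2) auto
  also have "\<dots> = (4 ^ mi_abs n) powr e * ((mi_fact n)\<^sup>2) powr e"
    by (rule powr_mult)
  also have "(4 ^ mi_abs n :: real) powr e = (4 powr e) ^ mi_abs n"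
  proof -
    have "(4 ^ mi_abs n :: real) = 4 powr real (mi_abs n)" by (simp add: powr_realpow)
    moreover have "(4 powr e :: real) ^ mi_abs n = 4 powr (real (mi_abs n) * e)" by (rule powr_power) simp
    ultimately show ?thesis by (simp add: powr_powr)
  qed
  also have "((mi_fact n)\<^sup>2) powr e = mi_fact n powr (2 * e)"
  proof -
    have sq: "mi_fact n powr (real 2) = (mi_fact n)\<^sup>2"
      by (rule powr_realpow) (rule mi_fact_pos)
    show ?thesis unfolding sq[symmetric] by (simp add: powr_powr)
  qed
  finally show ?thesis .
qed

lemma summable_on_pow_div_fact_powr:
  fixes E e :: real
  assumes E: "E > 0" and e: "e > 0"
  shows "(\<lambda>n::nat. E ^ n / fact n powr e) summable_on UNIV"
proof -
  define N where "N = nat \<lceil>(2 * E) powr (1 / e)\<rceil>"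
  have "summable (\<lambda>n::nat. E ^ n / fact n powr e)"
  proof (rule summable_ratio_test[where c = "1/2" and N = N])
    fix n assume n: "N \<le> n"
    have "(2 * E) powr (1 / e) \<le> real N" unfolding N_def by linarith
    also have "\<dots> \<le> real (Suc n)" using n by simp
    finally have "(2 * E) powr (1 / e) \<le> real (Suc n)" .
    then have "((2 * E) powr (1 / e)) powr e \<le> real (Suc n) powr e"
      using e by (intro powr_mono2) auto
    then have le: "2 * E \<le> real (Suc n) powr e"
      using E e by (simp add: powr_powr)
    have "norm (E ^ Suc n / fact (Suc n) powr e) = E * E ^ n / (real (Suc n) powr e * fact n powr e)"
      using E by (simp add: powr_mult)
    also have "\<dots> \<le> 1 / 2 * norm (E ^ n / fact n powr e)"
      using le E by (simp add: field_simps)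
    finally show "norm (E ^ Suc n / fact (Suc n) powr e) \<le> 1 / 2 * norm (E ^ n / fact n powr e)" .
  qed simp
  then show ?thesis
    using E by (intro norm_summable_imp_summable_on) simp
qed

lemma summable_on_mi_pow_div_mi_fact_powr:
  fixes E e :: real
  assumes E: "E > 0" and e: "e > 0"
  shows "(\<lambda>k::'d::finite \<Rightarrow> nat. E ^ mi_abs k / mi_fact k powr e) summable_on UNIV"
proof -
  have eq: "E ^ mi_abs k / mi_fact k powr e = (\<Prod>j\<in>UNIV. E ^ k j / fact (k j) powr e)" for k :: "'d \<Rightarrow> nat"
    unfolding mi_abs_def mi_fact_def power_sum prod_powr_distrib by (simp add: prod_dividef)
  have "Infinite_Set_Sum.abs_summable_on (\<lambda>n::nat. E ^ n / fact n powr e) UNIV"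
    using summable_on_pow_div_fact_powr[OF E e] E
    by (simp add: abs_summable_equivalent[symmetric])
  then have "Infinite_Set_Sum.abs_summable_on (\<lambda>k::'d \<Rightarrow> nat. \<Prod>j\<in>UNIV. E ^ k j / fact (k j) powr e) (PiE UNIV (\<lambda>_. UNIV))"
    by (intro abs_summable_on_prod_PiE) auto
  then show ?thesis
    using E by (simp add: eq abs_summable_equivalent[symmetric] prod_nonneg)
qed

section \<open>Laguerre functions of squares in several variables\<close>

lemma real_sqrt_prod: "sqrt (\<Prod>j\<in>A. f j) = (\<Prod>j\<in>A. sqrt (f j))"
  by (induction A rule: infinite_finite_induct) (auto simp: real_sqrt_mult)

definition binom_half_mi :: "('d::finite \<Rightarrow> nat) \<Rightarrow> real" where
  "binom_half_mi k = (\<Prod>j\<in>UNIV. binom_half (k j))"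

definition hermite_scale_mi :: "('d::finite \<Rightarrow> nat) \<Rightarrow> real" where
  "hermite_scale_mi n = (\<Prod>j\<in>UNIV. hermite_scale (n j))"

lemma hermite_scale_mi_eq:
  "hermite_scale_mi (n :: 'd::finite \<Rightarrow> nat) =
     (-1) ^ mi_abs n * pi powr (real CARD('d) / 4) * sqrt (mi_fact (\<lambda>j. 2 * n j)) / (2 ^ mi_abs n * mi_fact n)"
proof -
  have "pi powr (real CARD('d) / 4) = (\<Prod>j\<in>(UNIV::'d set). pi powr (1/4))"
    by (simp add: powr_power)
  then show ?thesis
    unfolding hermite_scale_mi_def hermite_scale_def mi_abs_def mi_fact_def power_sum real_sqrt_prod
    by (simp add: prod.distrib prod_dividef)
qed

lemma abs_hermite_scale_mi_le: "\<bar>hermite_scale_mi (n :: 'd::finite \<Rightarrow> nat)\<bar> \<le> pi powr (real CARD('d) / 4)"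
proof -
  have "\<bar>hermite_scale_mi n\<bar> \<le> (\<Prod>j\<in>(UNIV::'d set). pi powr (1/4))"
    unfolding hermite_scale_mi_def abs_prod by (intro prod_mono) (auto simp: abs_hermite_scale_le)
  then show ?thesis by (simp add: powr_power)
qed

lemma abs_binom_half_mi_le_1: "\<bar>binom_half_mi k\<bar> \<le> 1"
  unfolding binom_half_mi_def abs_prod
  by (intro prod_le_1) (auto simp: binom_half_le_1 binom_half_pos abs_of_pos less_imp_le)

lemma abs_hermite_scale_mi_mult_hermite_fun_le:
  "\<bar>hermite_scale_mi m * hermite_fun (\<lambda>j. 2 * m j) x\<bar> \<le> (1 + 2 * (\<Sum>j\<in>UNIV. (x j)\<^sup>2)) ^ mi_abs m"
proof -
  have "\<bar>hermite_scale_mi m * hermite_fun (\<lambda>j. 2 * m j) x\<bar> =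
      (\<Prod>j\<in>UNIV. \<bar>hermite_scale (m j) * hermite_fun1 (2 * m j) (x j)\<bar>)"
    unfolding hermite_scale_mi_def hermite_fun_def hermite_fun1_def
    by (simp add: prod.distrib[symmetric] abs_prod)
  also have "\<dots> \<le> (\<Prod>j\<in>UNIV. (1 + 2 * (\<Sum>j\<in>UNIV. (x j)\<^sup>2)) ^ m j)"
  proof (intro prod_mono conjI)
    fix j
    have "(x j)\<^sup>2 \<le> (\<Sum>j\<in>UNIV. (x j)\<^sup>2)"
      by (rule member_le_sum) auto
    then have "(1 + 2 * (x j)\<^sup>2) ^ m j \<le> (1 + 2 * (\<Sum>j\<in>UNIV. (x j)\<^sup>2)) ^ m j"
      by (intro power_mono) auto
    then show "\<bar>hermite_scale (m j) * hermite_fun1 (2 * m j) (x j)\<bar> \<le> (1 + 2 * (\<Sum>j\<in>UNIV. (x j)\<^sup>2)) ^ m j"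
      using abs_hermite_scale_mult_hermite_fun1_le[of "m j" "x j"] by linarith
  qed simp
  also have "\<dots> = (1 + 2 * (\<Sum>j\<in>UNIV. (x j)\<^sup>2)) ^ mi_abs m"
    unfolding mi_abs_def power_sum ..
  finally show ?thesis .
qed

lemma laguerre_fun_vsq_eq_sum:
  "laguerre_fun k (vsq x) =
     (\<Sum>m\<le>k. binom_half_mi (\<lambda>j. k j - m j) * (hermite_scale_mi m * hermite_fun (\<lambda>j. 2 * m j) x))"
proof -
  have "laguerre_fun k (vsq x) =
      (\<Prod>j\<in>UNIV. \<Sum>n\<le>k j. binom_half (k j - n) * (hermite_scale n * hermite_fun1 (2 * n) (x j)))"
    unfolding laguerre_fun_def vsq_def laguerre_poly_square_eq_sum ..
  also have "\<dots> = (\<Sum>m\<in>PiE UNIV (\<lambda>j. {..k j}).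
      \<Prod>j\<in>UNIV. binom_half (k j - m j) * (hermite_scale (m j) * hermite_fun1 (2 * m j) (x j)))"
    by (rule prod_sum_PiE) auto
  also have "\<dots> = (\<Sum>m\<le>k. binom_half_mi (\<lambda>j. k j - m j) * (hermite_scale_mi m * hermite_fun (\<lambda>j. 2 * m j) x))"
    unfolding atMost_fun_eq_PiE binom_half_mi_def hermite_scale_mi_def hermite_fun_def hermite_fun1_def
    by (simp add: prod.distrib)
  finally show ?thesis .
qed

lemma sum_abs_laguerre_vsq_terms_le:
  "(\<Sum>m\<le>k. \<bar>binom_half_mi (\<lambda>j. k j - m j) * (hermite_scale_mi m * hermite_fun (\<lambda>j. 2 * m j) x)\<bar>)
     \<le> (2 * (1 + 2 * (\<Sum>j\<in>UNIV. (x j)\<^sup>2))) ^ mi_abs k"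
proof -
  define B where "B = 1 + 2 * (\<Sum>j\<in>UNIV. (x j)\<^sup>2)"
  have B: "1 \<le> B" unfolding B_def by (simp add: sum_nonneg)
  have "\<bar>binom_half_mi (\<lambda>j. k j - m j) * (hermite_scale_mi m * hermite_fun (\<lambda>j. 2 * m j) x)\<bar> \<le> B ^ mi_abs k"
    if "m \<le> k" for m
  proof -
    have "\<bar>binom_half_mi (\<lambda>j. k j - m j) * (hermite_scale_mi m * hermite_fun (\<lambda>j. 2 * m j) x)\<bar> \<le> 1 * B ^ mi_abs m"
      unfolding abs_mult[of "binom_half_mi _"] B_def
      by (intro mult_mono abs_binom_half_mi_le_1 abs_hermite_scale_mi_mult_hermite_fun_le) auto
    also have "\<dots> \<le> B ^ mi_abs k"
      using B mi_abs_mono[OF that] by (simp add: power_increasing)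
    finally show ?thesis .
  qed
  then have "(\<Sum>m\<le>k. \<bar>binom_half_mi (\<lambda>j. k j - m j) * (hermite_scale_mi m * hermite_fun (\<lambda>j. 2 * m j) x)\<bar>)
      \<le> real (card {..k}) * B ^ mi_abs k"
    by (intro sum_bounded_above) auto
  also have "\<dots> \<le> 2 ^ mi_abs k * B ^ mi_abs k"
    using card_atMost_mi_le[of k] B by (intro mult_right_mono) auto
  finally show ?thesis by (simp only: B_def power_mult_distrib)
qed

section \<open>The sequence spaces of rapidly decaying coefficients\<close>

lemma norm_infsum_le_cmult_infsum:
  fixes f :: "'a \<Rightarrow> 'b::banach"
  assumes "w summable_on A" "\<And>k. k \<in> A \<Longrightarrow> norm (f k) \<le> c * w k"
  shows "norm (infsum f A) \<le> c * infsum w A"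
proof -
  have summable: "(\<lambda>k. norm (f k)) summable_on A"
    using assms by (intro summable_on_comparison_test[OF summable_on_cmult_right[OF assms(1)]]) auto
  have "norm (infsum f A) \<le> (\<Sum>\<^sub>\<infinity>k\<in>A. norm (f k))"
    by (rule norm_infsum_bound) (use summable in simp)
  also have "\<dots> \<le> (\<Sum>\<^sub>\<infinity>k\<in>A. c * w k)"
    using assms by (intro infsum_mono[OF summable summable_on_cmult_right]) auto
  also have "\<dots> = c * infsum w A"
    by (rule infsum_cmult_right')
  finally show ?thesis .
qed

lemma ell_flatE:
  assumes "a \<in> ell_flat \<tau>"
  obtains h M where "h > 0" "M \<ge> 0" "\<And>k. norm (a k) \<le> M / (h ^ mi_abs k * mi_fact k powr (1 / (2 * \<tau>)))"
proof -
  from assms obtain h M where h: "h > 0"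
    and M: "\<And>k. norm (a k) * h ^ mi_abs k * mi_fact k powr (1 / (2 * \<tau>)) \<le> M"
    unfolding ell_flat_def bdd_above_def by blast
  have pos: "0 < h ^ mi_abs k * mi_fact k powr (1 / (2 * \<tau>))" for k
    using h mi_fact_pos[of k] by simp
  have "0 \<le> norm (a k) * h ^ mi_abs k * mi_fact k powr (1 / (2 * \<tau>))" for k
    using h by simp
  then have "0 \<le> M"
    using M order_trans by blast
  moreover have "norm (a k) \<le> M / (h ^ mi_abs k * mi_fact k powr (1 / (2 * \<tau>)))" for k
    using M[of k] pos[of k] by (simp add: field_simps)
  ultimately show ?thesis using that h by blast
qed

lemma ell_flatI:
  assumes "h > 0" "\<And>k. norm (a k) * h ^ mi_abs k * mi_fact k powr (1 / (2 * \<tau>)) \<le> C"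
  shows "a \<in> ell_flat \<tau>"
  unfolding ell_flat_def using assms by (intro CollectI exI[of _ h] conjI bdd_aboveI) auto

lemma summable_on_norm_ell_flat_mult_pow:
  assumes "\<tau> > 0" "a \<in> ell_flat \<tau>" "D > 0"
  shows "(\<lambda>k. norm (a k) * D ^ mi_abs k) summable_on UNIV"
proof -
  obtain h M where h: "h > 0" and M: "M \<ge> 0"
    and bound: "\<And>k. norm (a k) \<le> M / (h ^ mi_abs k * mi_fact k powr (1 / (2 * \<tau>)))"
    using ell_flatE[OF assms(2)] by blast
  show ?thesis
  proof (rule summable_on_comparison_test)
    show "(\<lambda>k. M * ((D / h) ^ mi_abs k / mi_fact k powr (1 / (2 * \<tau>)))) summable_on UNIV"
      using assms h by (intro summable_on_cmult_right summable_on_mi_pow_div_mi_fact_powr) auto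
    fix k
    have "norm (a k) * D ^ mi_abs k \<le> M / (h ^ mi_abs k * mi_fact k powr (1 / (2 * \<tau>))) * D ^ mi_abs k"
      using bound[of k] assms(3) by (intro mult_right_mono) auto
    then show "norm (a k) * D ^ mi_abs k \<le> M * ((D / h) ^ mi_abs k / mi_fact k powr (1 / (2 * \<tau>)))"
      by (simp add: power_divide)
  qed (use assms(3) in auto)
qed

lemma ell_flat_mult_bounded:
  fixes a c :: "('d::finite \<Rightarrow> nat) \<Rightarrow> complex"
  assumes "a \<in> ell_flat \<tau>" "\<And>n. norm (c n) \<le> B"
  shows "(\<lambda>n. c n * a n) \<in> ell_flat \<tau>"
proof -
  obtain h M where h: "h > 0" and M: "M \<ge> 0"
    and bound: "\<And>k. norm (a k) \<le> M / (h ^ mi_abs k * mi_fact k powr (1 / (2 * \<tau>)))"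
    using ell_flatE[OF assms(1)] by blast
  show ?thesis
  proof (rule ell_flatI[OF h])
    fix n :: "'d \<Rightarrow> nat"
    have pos: "0 < h ^ mi_abs n * mi_fact n powr (1 / (2 * \<tau>))"
      using h mi_fact_pos[of n] by simp
    have "norm (c n * a n) \<le> B * (M / (h ^ mi_abs n * mi_fact n powr (1 / (2 * \<tau>))))"
      unfolding norm_mult using assms(2) bound by (intro mult_mono) (auto intro: order_trans[OF norm_ge_zero])
    then show "norm (c n * a n) * h ^ mi_abs n * mi_fact n powr (1 / (2 * \<tau>)) \<le> B * M"
      using pos by (simp add: field_simps)
  qed
qed

lemma ell_flat_shift_sum:
  fixes a g :: "('d::finite \<Rightarrow> nat) \<Rightarrow> complex"
  assumes "\<tau> > 0" "a \<in> ell_flat \<tau>" "\<And>k. norm (g k) \<le> 1"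
  shows "(\<lambda>n. \<Sum>\<^sub>\<infinity>k. a (\<lambda>j. k j + n j) * g k) \<in> ell_flat \<tau>"
proof -
  define e where "e = 1 / (2 * \<tau>)"
  have e: "e > 0" unfolding e_def using assms(1) by simp
  obtain h M where h: "h > 0" and M: "M \<ge> 0"
    and bound: "\<And>k. norm (a k) \<le> M / (h ^ mi_abs k * mi_fact k powr e)"
    using ell_flatE[OF assms(2)] unfolding e_def by blast
  define w where "w k = (1 / h) ^ mi_abs k / mi_fact k powr e" for k :: "'d \<Rightarrow> nat"
  have w: "w summable_on UNIV"
    unfolding w_def using h e by (intro summable_on_mi_pow_div_mi_fact_powr) auto
  show ?thesis
  proof (rule ell_flatI[OF h])
    fix n :: "'d \<Rightarrow> nat"
    define c where "c = M / (h ^ mi_abs n * mi_fact n powr e)"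
    have term_le: "norm (a (\<lambda>j. k j + n j) * g k) \<le> c * w k" for k
    proof -
      have "norm (a (\<lambda>j. k j + n j)) \<le> M / (h ^ mi_abs (\<lambda>j. k j + n j) * mi_fact (\<lambda>j. k j + n j) powr e)"
        by (rule bound)
      also have "\<dots> \<le> M / ((h ^ mi_abs k * mi_fact k powr e) * (h ^ mi_abs n * mi_fact n powr e))"
        using h M e mi_fact_pos[of k] mi_fact_pos[of n] mi_fact_pos[of "\<lambda>j. k j + n j"]
        by (intro divide_left_mono mi_weight_mult_le) auto
      also have "\<dots> = c * w k"
        unfolding c_def w_def by (simp add: field_simps power_one_over)
      finally have "norm (a (\<lambda>j. k j + n j)) \<le> c * w k" .
      moreover have "norm (g k) \<le> 1" by (rule assms(3))
      ultimately show ?thesis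
        unfolding norm_mult by (meson mult_right_le_one_le norm_ge_zero order_trans)
    qed
    have "norm (\<Sum>\<^sub>\<infinity>k. a (\<lambda>j. k j + n j) * g k) \<le> c * infsum w UNIV"
      using w term_le by (rule norm_infsum_le_cmult_infsum)
    then have "norm (\<Sum>\<^sub>\<infinity>k. a (\<lambda>j. k j + n j) * g k) * (h ^ mi_abs n * mi_fact n powr e) \<le> M * infsum w UNIV"
      using h mi_fact_pos[of n] unfolding c_def by (simp add: field_simps)
    then show "norm (\<Sum>\<^sub>\<infinity>k. a (\<lambda>j. k j + n j) * g k) * h ^ mi_abs n * mi_fact n powr (1 / (2 * \<tau>)) \<le> M * infsum w UNIV"
      by (simp add: e_def mult.assoc)
  qed
qed

definition spread_even :: "(('d::finite \<Rightarrow> nat) \<Rightarrow> 'a::zero) \<Rightarrow> ('d \<Rightarrow> nat) \<Rightarrow> 'a" where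
  "spread_even b m = (if \<exists>n. m = (\<lambda>j. 2 * n j) then b (\<lambda>j. m j div 2) else 0)"

lemma spread_even_double [simp]: "spread_even b (\<lambda>j. 2 * n j) = b n"
  unfolding spread_even_def by auto

lemma has_sum_spread_even_iff:
  fixes b \<phi> :: "('d::finite \<Rightarrow> nat) \<Rightarrow> 'a::{semiring_0, topological_space}"
  shows "((\<lambda>m. spread_even b m * \<phi> m) has_sum s) UNIV \<longleftrightarrow> ((\<lambda>n. b n * \<phi> (\<lambda>j. 2 * n j)) has_sum s) UNIV"
proof -
  define double where "double n = (\<lambda>j. 2 * n j)" for n :: "'d \<Rightarrow> nat"
  have "inj double" unfolding double_def inj_def by (auto simp: fun_eq_iff)
  have "((\<lambda>m. spread_even b m * \<phi> m) has_sum s) UNIV \<longleftrightarrow> ((\<lambda>m. spread_even b m * \<phi> m) has_sum s) (range double)"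
    by (rule has_sum_cong_neutral) (auto simp: spread_even_def double_def)
  also have "\<dots> \<longleftrightarrow> ((\<lambda>n. b n * \<phi> (\<lambda>j. 2 * n j)) has_sum s) UNIV"
    using \<open>inj double\<close> by (subst has_sum_reindex) (auto simp: o_def double_def)
  finally show ?thesis .
qed

lemma ell_flat_spread_even:
  fixes b :: "('d::finite \<Rightarrow> nat) \<Rightarrow> complex"
  assumes "\<tau> > 0" "b \<in> ell_flat \<tau>"
  shows "spread_even b \<in> ell_flat (2 * \<tau>)"
proof -
  define e where "e = 1 / (4 * \<tau>)"
  have e: "e > 0" unfolding e_def using assms(1) by simp
  obtain h M where h: "h > 0" and M: "M \<ge> 0"
    and bound: "\<And>n. norm (b n) \<le> M / (h ^ mi_abs n * mi_fact n powr (2 * e))"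
    using ell_flatE[OF assms(2)] unfolding e_def by (auto simp: field_simps)
  define q where "q = 4 powr e"
  have q: "q > 0" unfolding q_def by simp
  define h' where "h' = sqrt (h / q)"
  have h': "h' > 0" "h'\<^sup>2 = h / q" unfolding h'_def using h q by simp_all
  show ?thesis
  proof (rule ell_flatI[OF h'(1)])
    fix m :: "'d \<Rightarrow> nat"
    show "norm (spread_even b m) * h' ^ mi_abs m * mi_fact m powr (1 / (2 * (2 * \<tau>))) \<le> M"
    proof (cases "\<exists>n. m = (\<lambda>j. 2 * n j)")
      case False
      then show ?thesis using M by (simp add: spread_even_def)
    next
      case True
      then obtain n where m: "m = (\<lambda>j. 2 * n j)" by blast
      have "mi_abs m = 2 * mi_abs n" unfolding m mi_abs_def by (simp add: sum_distrib_left)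
      then have hm: "h' ^ mi_abs m = h ^ mi_abs n / q ^ mi_abs n"
        by (simp add: power_mult h'(2) power_divide)
      have fm: "mi_fact m powr e \<le> q ^ mi_abs n * mi_fact n powr (2 * e)"
        unfolding m q_def using e by (intro mi_fact_double_powr_le) simp
      have "norm (b n) * (h ^ mi_abs n / q ^ mi_abs n) * mi_fact m powr e
          \<le> M / (h ^ mi_abs n * mi_fact n powr (2 * e)) * (h ^ mi_abs n / q ^ mi_abs n) * (q ^ mi_abs n * mi_fact n powr (2 * e))"
        using bound[of n] fm h q M by (intro mult_mono) auto
      also have "\<dots> = M"
        using h q mi_fact_pos[of n] by simp
      finally have "norm (b n) * (h ^ mi_abs n / q ^ mi_abs n) * mi_fact m powr e \<le> M" .
      moreover have "1 / (2 * (2 * \<tau>)) = e" "spread_even b m = b n"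
        unfolding e_def m by simp_all
      ultimately show ?thesis by (simp only: hm)
    qed
  qed
qed

section \<open>Rearranging the Laguerre series\<close>

lemma has_sum_swap_atMost:
  fixes T :: "'a::order \<Rightarrow> 'a \<Rightarrow> 'b::banach"
  assumes fin: "\<And>k::'a. finite {..k}"
    and summable: "(\<lambda>k. \<Sum>m\<le>k. norm (T k m)) summable_on UNIV"
  shows "((\<lambda>m. \<Sum>\<^sub>\<infinity>k\<in>{m..}. T k m) has_sum (\<Sum>\<^sub>\<infinity>k. \<Sum>m\<le>k. T k m)) UNIV"
proof -
  have "(\<lambda>p. norm ((\<lambda>(k, m). T k m) p)) summable_on Sigma UNIV atMost"
    using summable fin by (intro Infinite_Sum.abs_summable_on_Sigma_iff[THEN iffD2]) (auto simp: sum_nonneg)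
  then have summable_Sigma: "(\<lambda>(k, m). T k m) summable_on Sigma UNIV atMost"
    by (rule abs_summable_summable)
  have "(\<Sum>\<^sub>\<infinity>k. \<Sum>m\<le>k. T k m) = (\<Sum>\<^sub>\<infinity>k. \<Sum>\<^sub>\<infinity>m\<in>{..k}. T k m)"
    using fin by simp
  also have "\<dots> = infsum (\<lambda>(k, m). T k m) (Sigma UNIV atMost)"
    using infsum_Sigma_banach[OF summable_Sigma] by simp
  finally have "((\<lambda>(k, m). T k m) has_sum (\<Sum>\<^sub>\<infinity>k. \<Sum>m\<le>k. T k m)) (Sigma UNIV atMost)"
    using summable_Sigma by simp
  moreover have "bij_betw (\<lambda>(m, k). (k, m)) (Sigma UNIV atLeast) (Sigma UNIV atMost)"
    by (rule bij_betwI[of _ _ _ "\<lambda>(k, m). (m, k)"]) auto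
  ultimately have swapped: "((\<lambda>(m, k). T k m) has_sum (\<Sum>\<^sub>\<infinity>k. \<Sum>m\<le>k. T k m)) (Sigma UNIV atLeast)"
    by (subst (asm) has_sum_reindex_bij_betw[symmetric]) (auto simp: case_prod_unfold)
  have "(\<lambda>k. T k m) summable_on {m..}" for m
  proof (rule abs_summable_summable, rule summable_on_comparison_test)
    show "(\<lambda>k. \<Sum>m\<le>k. norm (T k m)) summable_on {m..}"
      using summable by (rule summable_on_subset_banach) simp
    show "norm (T k m) \<le> (\<Sum>m\<le>k. norm (T k m))" if "k \<in> {m..}" for k
      using that fin by (intro member_le_sum) auto
  qed simp
  then show ?thesis
    by (intro has_sum_SigmaD[OF swapped]) auto
qed

lemma atLeast_mi_eq_range_add: "{m..} = range (\<lambda>l :: 'd \<Rightarrow> nat. \<lambda>j. l j + m j)"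
proof (intro set_eqI iffI)
  fix k assume "k \<in> {m..}"
  then show "k \<in> range (\<lambda>l j. l j + m j)"
    by (intro range_eqI[of k _ "\<lambda>j. k j - m j"]) (simp add: le_fun_def fun_eq_iff)
qed (auto simp: le_fun_def)

lemma laguerre_series_vsq_has_sum:
  fixes a :: "('d::finite \<Rightarrow> nat) \<Rightarrow> complex"
  assumes "\<tau> > 0" "a \<in> ell_flat \<tau>"
  shows "((\<lambda>m. of_real (hermite_scale_mi m) * (\<Sum>\<^sub>\<infinity>l. a (\<lambda>j. l j + m j) * of_real (binom_half_mi l))
            * of_real (hermite_fun (\<lambda>j. 2 * m j) x))
          has_sum (\<Sum>\<^sub>\<infinity>k. a k * of_real (laguerre_fun k (vsq x)))) UNIV"
proof -
  define B where "B = 1 + 2 * (\<Sum>j\<in>UNIV. (x j)\<^sup>2)"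
  have B: "1 \<le> B" unfolding B_def by (simp add: sum_nonneg)
  define H where "H m = hermite_scale_mi m * hermite_fun (\<lambda>j. 2 * m j) x" for m :: "'d \<Rightarrow> nat"
  define T where "T k m = a k * of_real (binom_half_mi (\<lambda>j. k j - m j) * H m)" for k m :: "'d \<Rightarrow> nat"
  have rows: "(\<Sum>m\<le>k. T k m) = a k * of_real (laguerre_fun k (vsq x))" for k
    unfolding T_def H_def laguerre_fun_vsq_eq_sum by (simp add: sum_distrib_left)
  have "(\<lambda>k. \<Sum>m\<le>k. norm (T k m)) summable_on UNIV"
  proof (rule summable_on_comparison_test)
    show "(\<lambda>k. norm (a k) * (2 * B) ^ mi_abs k) summable_on UNIV"
      using assms B by (intro summable_on_norm_ell_flat_mult_pow) auto
    show "(\<Sum>m\<le>k. norm (T k m)) \<le> norm (a k) * (2 * B) ^ mi_abs k" for k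
      unfolding T_def H_def B_def norm_mult norm_of_real sum_distrib_left[symmetric]
      by (intro mult_left_mono sum_abs_laguerre_vsq_terms_le) simp
  qed (auto simp: sum_nonneg)
  then have "((\<lambda>m. \<Sum>\<^sub>\<infinity>k\<in>{m..}. T k m) has_sum (\<Sum>\<^sub>\<infinity>k. \<Sum>m\<le>k. T k m)) UNIV"
    by (intro has_sum_swap_atMost) auto
  moreover have "(\<Sum>\<^sub>\<infinity>k\<in>{m..}. T k m) =
      of_real (hermite_scale_mi m) * (\<Sum>\<^sub>\<infinity>l. a (\<lambda>j. l j + m j) * of_real (binom_half_mi l))
        * of_real (hermite_fun (\<lambda>j. 2 * m j) x)" for m
  proof -
    have "inj (\<lambda>l :: 'd \<Rightarrow> nat. \<lambda>j. l j + m j)"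
      by (auto simp: inj_def fun_eq_iff)
    then have "(\<Sum>\<^sub>\<infinity>k\<in>{m..}. T k m) = (\<Sum>\<^sub>\<infinity>l. a (\<lambda>j. l j + m j) * of_real (binom_half_mi l) * of_real (H m))"
      unfolding atLeast_mi_eq_range_add by (subst infsum_reindex) (auto simp: o_def T_def mult.assoc)
    also have "\<dots> = (\<Sum>\<^sub>\<infinity>l. a (\<lambda>j. l j + m j) * of_real (binom_half_mi l)) * of_real (H m)"
      by (rule infsum_cmult_left')
    finally show ?thesis by (simp add: H_def mult_ac)
  qed
  ultimately show ?thesis by (simp add: rows)
qed

theorem theorem6p4:
  fixes \<sigma> :: real
    and a :: "('d::finite \<Rightarrow> nat) \<Rightarrow> complex"
    and f :: "('d \<Rightarrow> real) \<Rightarrow> complex"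
    and b :: "('d \<Rightarrow> nat) \<Rightarrow> complex"
  assumes "\<sigma> > 0"
    and "a \<in> ell_flat (\<sigma> / 2)"
    and "\<forall>x. (\<forall>j. 0 \<le> x j) \<longrightarrow>
           (\<lambda>n. norm (a n * complex_of_real (laguerre_fun n x))) summable_on UNIV \<and>
           f x = (\<Sum>\<^sub>\<infinity>n. a n * complex_of_real (laguerre_fun n x))"
    and "\<forall>n. b n = complex_of_real
           ((-1) ^ mi_abs n * pi powr (real CARD('d) / 4) * sqrt (mi_fact (\<lambda>j. 2 * n j))
            / (2 ^ mi_abs n * mi_fact n))
         * (\<Sum>\<^sub>\<infinity>k. a (\<lambda>j. k j + n j)
              * complex_of_real (\<Prod>j\<in>UNIV. (real (k j) - 1 / 2) gchoose (k j)))"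
  shows "f \<circ> vsq \<in> H_flat_even \<sigma>
    \<and> (\<lambda>m. if \<exists>n. m = (\<lambda>j. 2 * n j) then b (\<lambda>j. m j div 2) else 0) \<in> ell_flat \<sigma>
    \<and> (\<forall>x. (\<lambda>n. b n * complex_of_real (hermite_fun (\<lambda>j. 2 * n j) x)) summable_on UNIV
           \<and> (f \<circ> vsq) x = (\<Sum>\<^sub>\<infinity>n. b n * complex_of_real (hermite_fun (\<lambda>j. 2 * n j) x)))"
proof -
  have b: "b = (\<lambda>n. of_real (hermite_scale_mi n) * (\<Sum>\<^sub>\<infinity>k. a (\<lambda>j. k j + n j) * of_real (binom_half_mi k)))"
    using assms(4) by (simp add: fun_eq_iff hermite_scale_mi_eq binom_half_mi_def binom_half_def)
  have "b \<in> ell_flat (\<sigma> / 2)"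
    unfolding b using assms(1,2) abs_binom_half_mi_le_1 abs_hermite_scale_mi_le
    by (intro ell_flat_mult_bounded ell_flat_shift_sum) auto
  then have ell: "spread_even b \<in> ell_flat \<sigma>"
    using ell_flat_spread_even[of "\<sigma> / 2" b] assms(1) by simp
  have hermite_series: "((\<lambda>n. b n * of_real (hermite_fun (\<lambda>j. 2 * n j) x)) has_sum (f \<circ> vsq) x) UNIV" for x
  proof -
    have "f (vsq x) = (\<Sum>\<^sub>\<infinity>k. a k * of_real (laguerre_fun k (vsq x)))"
      using assms(3) by (simp add: vsq_def)
    then show ?thesis
      using laguerre_series_vsq_has_sum[of "\<sigma> / 2" a x] assms(1,2) by (simp add: b)
  qed
  then have "((\<lambda>m. spread_even b m * of_real (hermite_fun m x)) has_sum (f \<circ> vsq) x) UNIV" for x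
    by (subst has_sum_spread_even_iff)
  then have "f \<circ> vsq \<in> H_flat \<sigma>"
    unfolding H_flat_def by (intro CollectI bexI[OF _ ell] allI conjI has_sum_imp_summable infsumI[symmetric])
  moreover have vsq_flip: "vsq (x(j := - x j)) = vsq x" for x j
    by (simp add: vsq_def fun_eq_iff)
  ultimately show ?thesis
    using ell hermite_series unfolding H_flat_even_def spread_even_def
    by (auto simp: vsq_flip intro: has_sum_imp_summable infsumI[symmetric])
qed

end
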